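(* Let $R$ be a noetherian integral domain, $n\ge1$, $R[n]=R[t]/(t^n)$, and $M$ an $R[n]$-module of finite type. Let $M^\vee=\mathrm{Hom}_{R[n]}(M,R[n])$ and let $t_M:M\to M^{\vee\vee}$ be the canonical morphism, $t_M(m)(\phi)=\phi(m)$. Then $\ker(t_M)=T(M)$.
   Context: An element $u=\sum_{i=0}^{n-1}u_it^i\in R[n]$ ($u_i\in R$) is a non-zero-divisor iff $u_0\ne0$; let $S_n$ be the set of non-zero-divisors. The torsion submodule $T(M)$ is the set of $m\in M$ such that $\alpha m=0$ for some $\alpha\in S_n$. *)

theory Defs
  imports "HOL-Algebra.Algebra"
begin

definition trunc_poly_ring :: "('a, 'm) ring_scheme \<Rightarrow> nat \<Rightarrow> (nat \<Rightarrow> 'a) set ring" where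
  "trunc_poly_ring R n = UP R Quot (PIdl\<^bsub>UP R\<^esub> (monom (UP R) \<one>\<^bsub>R\<^esub> n))"

definition self_module :: "('a, 'm) ring_scheme \<Rightarrow> ('a, 'a) module" where
  "self_module A = \<lparr>carrier = carrier A, monoid.mult = monoid.mult A, monoid.one = \<one>\<^bsub>A\<^esub>,
     ring.zero = \<zero>\<^bsub>A\<^esub>, ring.add = ring.add A, smult = monoid.mult A\<rparr>"

definition non_zero_divisors :: "('a, 'm) ring_scheme \<Rightarrow> 'a set" where
  "non_zero_divisors A = {u \<in> carrier A. \<forall>v \<in> carrier A. u \<otimes>\<^bsub>A\<^esub> v = \<zero>\<^bsub>A\<^esub> \<longrightarrow> v = \<zero>\<^bsub>A\<^esub>}"

definition torsion :: "('a, 'm) ring_scheme \<Rightarrow> ('a, 'b, 'c) module_scheme \<Rightarrow> 'b set" where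
  "torsion A M = {m \<in> carrier M. \<exists>\<alpha> \<in> non_zero_divisors A. \<alpha> \<odot>\<^bsub>M\<^esub> m = \<zero>\<^bsub>M\<^esub>}"

definition finite_type :: "('a, 'm) ring_scheme \<Rightarrow> ('a, 'b, 'c) module_scheme \<Rightarrow> bool" where
  "finite_type A M \<longleftrightarrow> (\<exists>G. finite G \<and> G \<subseteq> carrier M \<and>
     (\<forall>m \<in> carrier M. \<exists>f. f \<in> G \<rightarrow> carrier A \<and> m = (\<Oplus>\<^bsub>M\<^esub> g \<in> G. f g \<odot>\<^bsub>M\<^esub> g)))"

definition lin_hom :: "('a, 'm) ring_scheme \<Rightarrow> ('a, 'b, 'c) module_scheme \<Rightarrow> ('a, 'd, 'e) module_scheme
    \<Rightarrow> ('b \<Rightarrow> 'd) set" where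
  "lin_hom A M N = {f. f \<in> carrier M \<rightarrow> carrier N \<and> f \<in> extensional (carrier M) \<and>
     (\<forall>x \<in> carrier M. \<forall>y \<in> carrier M. f (x \<oplus>\<^bsub>M\<^esub> y) = f x \<oplus>\<^bsub>N\<^esub> f y) \<and>
     (\<forall>a \<in> carrier A. \<forall>x \<in> carrier M. f (a \<odot>\<^bsub>M\<^esub> x) = a \<odot>\<^bsub>N\<^esub> f x)}"

definition dual_hom :: "('a, 'm) ring_scheme \<Rightarrow> ('a, 'b, 'c) module_scheme \<Rightarrow> ('b \<Rightarrow> 'a) set" where
  "dual_hom A M = lin_hom A M (self_module A)"

definition can_bidual :: "('a, 'm) ring_scheme \<Rightarrow> ('a, 'b, 'c) module_scheme \<Rightarrow> 'b \<Rightarrow> (('b \<Rightarrow> 'a) \<Rightarrow> 'a)" where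
  "can_bidual A M m = (\<lambda>\<phi> \<in> dual_hom A M. \<phi> m)"

definition ker_can_bidual :: "('a, 'm) ring_scheme \<Rightarrow> ('a, 'b, 'c) module_scheme \<Rightarrow> 'b set" where
  "ker_can_bidual A M = {m \<in> carrier M. can_bidual A M m = (\<lambda>\<phi> \<in> dual_hom A M. \<zero>\<^bsub>A\<^esub>)}"

end

theory Submission
  imports Defs
begin

(* If alpha m = 0 for a non-zero-divisor alpha, then alpha phi(m) = phi(alpha m) = 0 forces
   phi(m) = 0 for every linear form phi. Conversely let m be non-torsion. Non-zero elements of R
   remain non-zero-divisors in R[n], so r m <> 0 for r <> 0, and M is finitely generated as an
   R-module, by the t^i g. Over a domain such a module carries an R-linear form f with f(m) <> 0:
   adjoin the generators one at a time to the line R m, extending f freely when the new line meets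
   the current span only in 0, and composing f with multiplication by some d <> 0 otherwise.
   Finally R[n] is a Frobenius R-algebra: x |-> sum_i f(t^(n-1-i) x) t^i is R[n]-linear, with
   coefficient f(x) at t^(n-1), so t_M(m) <> 0. *)

section \<open>Linear forms on finitely generated modules\<close>

lemma self_module_simps [simp]:
  "carrier (self_module A) = carrier A" "ring.add (self_module A) = ring.add A"
  "ring.zero (self_module A) = ring.zero A" "module.smult (self_module A) = monoid.mult A"
  unfolding self_module_def by simp_all

lemma (in abelian_monoid) finsum_add_closed:
  assumes "finite A" "f \<in> A \<rightarrow> Z" "Z \<subseteq> carrier G" "\<zero> \<in> Z"
    and "\<And>x y. x \<in> Z \<Longrightarrow> y \<in> Z \<Longrightarrow> x \<oplus> y \<in> Z"
  shows "finsum G f A \<in> Z"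
  using assms(1,2)
proof (induction A rule: finite_induct)
  case (insert x A)
  then have "f x \<in> Z" "f \<in> A \<rightarrow> Z" by auto
  moreover have "f \<in> A \<rightarrow> carrier G" "f x \<in> carrier G" using calculation assms(3) by auto
  ultimately show ?case using insert.hyps insert.IH assms(5) by simp
qed (simp add: assms(4))

definition line_sum :: "('a, 'm) ring_scheme \<Rightarrow> ('a, 'b, 'c) module_scheme \<Rightarrow> 'b set \<Rightarrow> 'b \<Rightarrow> 'b set" where
  "line_sum R M S g = {s \<oplus>\<^bsub>M\<^esub> a \<odot>\<^bsub>M\<^esub> g | s a. s \<in> S \<and> a \<in> carrier R}"

primrec lin_span :: "('a, 'm) ring_scheme \<Rightarrow> ('a, 'b, 'c) module_scheme \<Rightarrow> 'b list \<Rightarrow> 'b set" where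
  "lin_span R M [] = {\<zero>\<^bsub>M\<^esub>}"
| "lin_span R M (g # gs) = line_sum R M (lin_span R M gs) g"

lemma lin_span_subsetI:
  assumes "\<zero>\<^bsub>M\<^esub> \<in> Z"
    and "\<And>z a g. z \<in> Z \<Longrightarrow> a \<in> carrier R \<Longrightarrow> g \<in> set gs \<Longrightarrow> z \<oplus>\<^bsub>M\<^esub> a \<odot>\<^bsub>M\<^esub> g \<in> Z"
  shows "lin_span R M gs \<subseteq> Z"
  using assms by (induction gs) (auto simp: line_sum_def)

context module
begin

lemma submodule_zero_closed: "submodule S R M \<Longrightarrow> \<zero>\<^bsub>M\<^esub> \<in> S"
  using subgroup.one_closed[OF submodule.axioms(1)] by fastforce

lemma zero_submodule: "submodule {\<zero>\<^bsub>M\<^esub>} R M"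
  by (rule submoduleI) auto

lemma line_comb_add:
  assumes "s \<in> carrier M" "t \<in> carrier M" "g \<in> carrier M" "a \<in> carrier R" "b \<in> carrier R"
  shows "(s \<oplus>\<^bsub>M\<^esub> a \<odot>\<^bsub>M\<^esub> g) \<oplus>\<^bsub>M\<^esub> (t \<oplus>\<^bsub>M\<^esub> b \<odot>\<^bsub>M\<^esub> g) = (s \<oplus>\<^bsub>M\<^esub> t) \<oplus>\<^bsub>M\<^esub> (a \<oplus> b) \<odot>\<^bsub>M\<^esub> g"
  using assms by (simp add: smult_l_distr M.a_ac)

lemma line_comb_smult:
  assumes "s \<in> carrier M" "g \<in> carrier M" "a \<in> carrier R" "c \<in> carrier R"
  shows "c \<odot>\<^bsub>M\<^esub> (s \<oplus>\<^bsub>M\<^esub> a \<odot>\<^bsub>M\<^esub> g) = c \<odot>\<^bsub>M\<^esub> s \<oplus>\<^bsub>M\<^esub> (c \<otimes> a) \<odot>\<^bsub>M\<^esub> g"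
  using assms by (simp add: smult_r_distr smult_assoc1)

lemma line_sum_submodule:
  assumes S: "submodule S R M" and g: "g \<in> carrier M"
  shows "submodule (line_sum R M S g) R M"
proof -
  have Sc: "S \<subseteq> carrier M" using submoduleE(1)[OF S] .
  show ?thesis
  proof (rule submoduleI)
    show "line_sum R M S g \<subseteq> carrier M"
      using Sc g by (auto simp: line_sum_def)
    have "\<zero>\<^bsub>M\<^esub> = \<zero>\<^bsub>M\<^esub> \<oplus>\<^bsub>M\<^esub> \<zero> \<odot>\<^bsub>M\<^esub> g" using g by simp
    then show "\<zero>\<^bsub>M\<^esub> \<in> line_sum R M S g"
      using submodule_zero_closed[OF S] unfolding line_sum_def by blast
  next
    fix x assume "x \<in> line_sum R M S g"
    then obtain s a where x: "x = s \<oplus>\<^bsub>M\<^esub> a \<odot>\<^bsub>M\<^esub> g" "s \<in> S" "a \<in> carrier R"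
      by (auto simp: line_sum_def)
    have "\<ominus>\<^bsub>M\<^esub> x = \<ominus>\<^bsub>M\<^esub> s \<oplus>\<^bsub>M\<^esub> (\<ominus> a) \<odot>\<^bsub>M\<^esub> g"
      using x Sc g by (simp add: smult_l_minus M.minus_add subsetD M.a_comm)
    then show "\<ominus>\<^bsub>M\<^esub> x \<in> line_sum R M S g"
      using x submoduleE(3)[OF S] by (auto simp: line_sum_def)
  next
    fix x y assume "x \<in> line_sum R M S g" "y \<in> line_sum R M S g"
    then obtain s a t b where xy: "x = s \<oplus>\<^bsub>M\<^esub> a \<odot>\<^bsub>M\<^esub> g" "s \<in> S" "a \<in> carrier R"
      "y = t \<oplus>\<^bsub>M\<^esub> b \<odot>\<^bsub>M\<^esub> g" "t \<in> S" "b \<in> carrier R"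
      by (auto simp: line_sum_def)
    then have "x \<oplus>\<^bsub>M\<^esub> y = (s \<oplus>\<^bsub>M\<^esub> t) \<oplus>\<^bsub>M\<^esub> (a \<oplus> b) \<odot>\<^bsub>M\<^esub> g"
      using Sc g by (simp add: line_comb_add subsetD)
    then show "x \<oplus>\<^bsub>M\<^esub> y \<in> line_sum R M S g"
      using xy submoduleE(5)[OF S] by (auto simp: line_sum_def)
  next
    fix c x assume c: "c \<in> carrier R" and "x \<in> line_sum R M S g"
    then obtain s a where x: "x = s \<oplus>\<^bsub>M\<^esub> a \<odot>\<^bsub>M\<^esub> g" "s \<in> S" "a \<in> carrier R"
      by (auto simp: line_sum_def)
    then have "c \<odot>\<^bsub>M\<^esub> x = c \<odot>\<^bsub>M\<^esub> s \<oplus>\<^bsub>M\<^esub> (c \<otimes> a) \<odot>\<^bsub>M\<^esub> g"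
      using c Sc g by (simp add: line_comb_smult subsetD)
    then show "c \<odot>\<^bsub>M\<^esub> x \<in> line_sum R M S g"
      using x c submoduleE(4)[OF S] by (auto simp: line_sum_def)
  qed
qed

lemma subset_line_sum: "submodule S R M \<Longrightarrow> g \<in> carrier M \<Longrightarrow> S \<subseteq> line_sum R M S g"
  unfolding line_sum_def by (force intro: exI[of _ \<zero>] dest: submoduleE(1))

lemma lin_span_submodule: "set gs \<subseteq> carrier M \<Longrightarrow> submodule (lin_span R M gs) R M"
  by (induction gs) (simp_all add: zero_submodule line_sum_submodule)

lemma lin_span_closed: "set gs \<subseteq> carrier M \<Longrightarrow> lin_span R M gs \<subseteq> carrier M"
  using lin_span_submodule submoduleE(1) by blast

lemma mem_lin_span: "set gs \<subseteq> carrier M \<Longrightarrow> g \<in> set gs \<Longrightarrow> g \<in> lin_span R M gs"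
proof (induction gs)
  case (Cons h gs)
  have sub: "submodule (lin_span R M gs) R M" using Cons.prems lin_span_submodule by simp
  show ?case
  proof (cases "g = h")
    case True
    have "g = \<zero>\<^bsub>M\<^esub> \<oplus>\<^bsub>M\<^esub> \<one> \<odot>\<^bsub>M\<^esub> h" using True Cons.prems by simp
    then show ?thesis
      using submodule_zero_closed[OF sub] by (auto simp: line_sum_def)
  next
    case False
    then show ?thesis using Cons subset_line_sum[OF sub] by auto
  qed
qed simp

lemma lin_span_mono:
  assumes "set hs \<subseteq> carrier M" "set gs \<subseteq> set hs"
  shows "lin_span R M gs \<subseteq> lin_span R M hs"
proof (rule lin_span_subsetI)
  have sub: "submodule (lin_span R M hs) R M" using lin_span_submodule assms(1) .
  show "\<zero>\<^bsub>M\<^esub> \<in> lin_span R M hs" using submodule_zero_closed[OF sub] .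
  fix z a g assume "z \<in> lin_span R M hs" "a \<in> carrier R" "g \<in> set gs"
  then show "z \<oplus>\<^bsub>M\<^esub> a \<odot>\<^bsub>M\<^esub> g \<in> lin_span R M hs"
    using assms mem_lin_span submoduleE(4,5)[OF sub] by blast
qed

lemma finite_type_imp_lin_span:
  assumes "finite_type R M"
  obtains gs where "set gs \<subseteq> carrier M" "lin_span R M gs = carrier M"
proof -
  obtain G where G: "finite G" "G \<subseteq> carrier M"
    and comb: "\<And>m. m \<in> carrier M \<Longrightarrow> \<exists>f. f \<in> G \<rightarrow> carrier R \<and> m = (\<Oplus>\<^bsub>M\<^esub>g\<in>G. f g \<odot>\<^bsub>M\<^esub> g)"
    using assms unfolding finite_type_def by blast
  obtain gs where gs: "set gs = G" using finite_list[OF G(1)] by blast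
  have sub: "submodule (lin_span R M gs) R M" using lin_span_submodule G gs by simp
  have "carrier M \<subseteq> lin_span R M gs"
  proof
    fix m assume "m \<in> carrier M"
    then obtain f where f: "f \<in> G \<rightarrow> carrier R" "m = (\<Oplus>\<^bsub>M\<^esub>g\<in>G. f g \<odot>\<^bsub>M\<^esub> g)" using comb by blast
    have "(\<lambda>g. f g \<odot>\<^bsub>M\<^esub> g) \<in> G \<rightarrow> lin_span R M gs"
      using f(1) G(2) gs mem_lin_span submoduleE(4)[OF sub] by (auto simp: Pi_iff)
    then show "m \<in> lin_span R M gs"
      using M.finsum_add_closed[OF G(1)] submoduleE(1,5)[OF sub] submodule_zero_closed[OF sub] f(2)
      by simp
  qed
  then show ?thesis using that G gs lin_span_closed by blast
qed

lemma restrict_in_dual_hom: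
  assumes S: "submodule S R M"
    and "\<And>x. x \<in> S \<Longrightarrow> f x \<in> carrier R"
    and "\<And>x y. x \<in> S \<Longrightarrow> y \<in> S \<Longrightarrow> f (x \<oplus>\<^bsub>M\<^esub> y) = f x \<oplus> f y"
    and "\<And>a x. a \<in> carrier R \<Longrightarrow> x \<in> S \<Longrightarrow> f (a \<odot>\<^bsub>M\<^esub> x) = a \<otimes> f x"
  shows "restrict f S \<in> dual_hom R (M\<lparr>carrier := S\<rparr>)"
  using assms submoduleE(4,5)[OF S] unfolding dual_hom_def lin_hom_def by auto

lemma dual_hom_on_submoduleD:
  assumes "\<phi> \<in> dual_hom R (M\<lparr>carrier := S\<rparr>)"
  shows "\<And>x. x \<in> S \<Longrightarrow> \<phi> x \<in> carrier R"
    and "\<And>x y. x \<in> S \<Longrightarrow> y \<in> S \<Longrightarrow> \<phi> (x \<oplus>\<^bsub>M\<^esub> y) = \<phi> x \<oplus> \<phi> y"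
    and "\<And>a x. a \<in> carrier R \<Longrightarrow> x \<in> S \<Longrightarrow> \<phi> (a \<odot>\<^bsub>M\<^esub> x) = a \<otimes> \<phi> x"
  using assms unfolding dual_hom_def lin_hom_def by auto

lemma line_comb_unique:
  assumes S: "submodule S R M" and g: "g \<in> carrier M"
    and indep: "\<And>d. d \<in> carrier R \<Longrightarrow> d \<odot>\<^bsub>M\<^esub> g \<in> S \<Longrightarrow> d = \<zero>"
    and s: "s \<in> S" "t \<in> S" and a: "a \<in> carrier R" "b \<in> carrier R"
    and eq: "s \<oplus>\<^bsub>M\<^esub> a \<odot>\<^bsub>M\<^esub> g = t \<oplus>\<^bsub>M\<^esub> b \<odot>\<^bsub>M\<^esub> g"
  shows "s = t \<and> a = b"
proof -
  have sc: "s \<in> carrier M" "t \<in> carrier M" using s submoduleE(1)[OF S] by auto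
  have "(a \<ominus> b) \<odot>\<^bsub>M\<^esub> g = \<ominus>\<^bsub>M\<^esub> s \<oplus>\<^bsub>M\<^esub> (s \<oplus>\<^bsub>M\<^esub> a \<odot>\<^bsub>M\<^esub> g) \<oplus>\<^bsub>M\<^esub> \<ominus>\<^bsub>M\<^esub> (b \<odot>\<^bsub>M\<^esub> g)"
    using sc g a by (simp add: R.minus_eq smult_l_distr smult_l_minus M.a_assoc[symmetric] M.l_neg)
  also have "\<dots> = \<ominus>\<^bsub>M\<^esub> s \<oplus>\<^bsub>M\<^esub> t"
    using sc g a by (simp add: eq M.a_assoc M.r_neg)
  finally have "(a \<ominus> b) \<odot>\<^bsub>M\<^esub> g \<in> S"
    using s submoduleE(3,5)[OF S] by simp
  then have "a \<ominus> b = \<zero>" using indep a by simp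
  then have "a = b" using a by (simp add: R.r_right_minus_eq)
  then show ?thesis using eq sc g a by (simp add: M.add.right_cancel)
qed

lemma dual_hom_extend_line:
  assumes S: "submodule S R M" and g: "g \<in> carrier M"
    and indep: "\<And>d. d \<in> carrier R \<Longrightarrow> d \<odot>\<^bsub>M\<^esub> g \<in> S \<Longrightarrow> d = \<zero>"
    and \<phi>: "\<phi> \<in> dual_hom R (M\<lparr>carrier := S\<rparr>)" and c: "c \<in> carrier R"
  obtains \<psi> where "\<psi> \<in> dual_hom R (M\<lparr>carrier := line_sum R M S g\<rparr>)"
    and "\<And>s a. s \<in> S \<Longrightarrow> a \<in> carrier R \<Longrightarrow> \<psi> (s \<oplus>\<^bsub>M\<^esub> a \<odot>\<^bsub>M\<^esub> g) = \<phi> s \<oplus> a \<otimes> c"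
proof -
  note \<phi>D = dual_hom_on_submoduleD[OF \<phi>]
  have Sc: "S \<subseteq> carrier M" using submoduleE(1)[OF S] .
  define \<psi> where
    "\<psi> x = (THE y. \<exists>s a. s \<in> S \<and> a \<in> carrier R \<and> x = s \<oplus>\<^bsub>M\<^esub> a \<odot>\<^bsub>M\<^esub> g \<and> y = \<phi> s \<oplus> a \<otimes> c)" for x
  have \<psi>_comb: "\<psi> (s \<oplus>\<^bsub>M\<^esub> a \<odot>\<^bsub>M\<^esub> g) = \<phi> s \<oplus> a \<otimes> c" if "s \<in> S" "a \<in> carrier R" for s a
    unfolding \<psi>_def
  proof (rule the_equality)
    fix y
    assume "\<exists>s' a'. s' \<in> S \<and> a' \<in> carrier R \<and> s \<oplus>\<^bsub>M\<^esub> a \<odot>\<^bsub>M\<^esub> g = s' \<oplus>\<^bsub>M\<^esub> a' \<odot>\<^bsub>M\<^esub> g \<and> y = \<phi> s' \<oplus> a' \<otimes> c"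
    then obtain s' a' where "s' \<in> S" "a' \<in> carrier R"
      "s \<oplus>\<^bsub>M\<^esub> a \<odot>\<^bsub>M\<^esub> g = s' \<oplus>\<^bsub>M\<^esub> a' \<odot>\<^bsub>M\<^esub> g" "y = \<phi> s' \<oplus> a' \<otimes> c"
      by blast
    then show "y = \<phi> s \<oplus> a \<otimes> c" using line_comb_unique[OF S g indep] that by metis
  qed (use that in blast)
  have "restrict \<psi> (line_sum R M S g) \<in> dual_hom R (M\<lparr>carrier := line_sum R M S g\<rparr>)"
  proof (rule restrict_in_dual_hom[OF line_sum_submodule[OF S g]])
    fix x assume "x \<in> line_sum R M S g"
    then show "\<psi> x \<in> carrier R" using \<psi>_comb \<phi>D(1) c by (auto simp: line_sum_def)
  next
    fix x y assume "x \<in> line_sum R M S g" "y \<in> line_sum R M S g"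
    then obtain s a t b where x: "x = s \<oplus>\<^bsub>M\<^esub> a \<odot>\<^bsub>M\<^esub> g" "s \<in> S" "a \<in> carrier R"
      and y: "y = t \<oplus>\<^bsub>M\<^esub> b \<odot>\<^bsub>M\<^esub> g" "t \<in> S" "b \<in> carrier R"
      by (auto simp: line_sum_def)
    have "\<psi> (x \<oplus>\<^bsub>M\<^esub> y) = \<phi> (s \<oplus>\<^bsub>M\<^esub> t) \<oplus> (a \<oplus> b) \<otimes> c"
      using x y Sc g submoduleE(5)[OF S] by (simp add: line_comb_add subsetD \<psi>_comb)
    then show "\<psi> (x \<oplus>\<^bsub>M\<^esub> y) = \<psi> x \<oplus> \<psi> y"
      using x y c \<phi>D(1,2) by (simp add: \<psi>_comb R.l_distr R.a_ac)
  next
    fix r x assume r: "r \<in> carrier R" and "x \<in> line_sum R M S g"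
    then obtain s a where x: "x = s \<oplus>\<^bsub>M\<^esub> a \<odot>\<^bsub>M\<^esub> g" "s \<in> S" "a \<in> carrier R"
      by (auto simp: line_sum_def)
    have "\<psi> (r \<odot>\<^bsub>M\<^esub> x) = \<phi> (r \<odot>\<^bsub>M\<^esub> s) \<oplus> (r \<otimes> a) \<otimes> c"
      using x r Sc g submoduleE(4)[OF S] by (simp add: line_comb_smult subsetD \<psi>_comb)
    then show "\<psi> (r \<odot>\<^bsub>M\<^esub> x) = r \<otimes> \<psi> x"
      using x r c \<phi>D(1,3) by (simp add: \<psi>_comb R.r_distr R.m_assoc)
  qed
  moreover have "s \<oplus>\<^bsub>M\<^esub> a \<odot>\<^bsub>M\<^esub> g \<in> line_sum R M S g" if "s \<in> S" "a \<in> carrier R" for s a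
    using that by (auto simp: line_sum_def)
  ultimately show ?thesis using that \<psi>_comb by simp
qed

lemma dual_hom_extend_scaled:
  assumes S: "submodule S R M" and g: "g \<in> carrier M"
    and d: "d \<in> carrier R" "d \<odot>\<^bsub>M\<^esub> g \<in> S" and \<phi>: "\<phi> \<in> dual_hom R (M\<lparr>carrier := S\<rparr>)"
  shows "(\<lambda>x\<in>line_sum R M S g. \<phi> (d \<odot>\<^bsub>M\<^esub> x)) \<in> dual_hom R (M\<lparr>carrier := line_sum R M S g\<rparr>)"
proof -
  note \<phi>D = dual_hom_on_submoduleD[OF \<phi>]
  have Sc: "S \<subseteq> carrier M" using submoduleE(1)[OF S] .
  have S': "line_sum R M S g \<subseteq> carrier M" using submoduleE(1)[OF line_sum_submodule[OF S g]] .
  have dS: "d \<odot>\<^bsub>M\<^esub> x \<in> S" if x: "x \<in> line_sum R M S g" for x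
  proof -
    obtain s a where x: "x = s \<oplus>\<^bsub>M\<^esub> a \<odot>\<^bsub>M\<^esub> g" "s \<in> S" "a \<in> carrier R"
      using x by (auto simp: line_sum_def)
    have "d \<odot>\<^bsub>M\<^esub> x = d \<odot>\<^bsub>M\<^esub> s \<oplus>\<^bsub>M\<^esub> (d \<otimes> a) \<odot>\<^bsub>M\<^esub> g"
      using x d g Sc by (simp add: line_comb_smult subsetD)
    also have "(d \<otimes> a) \<odot>\<^bsub>M\<^esub> g = a \<odot>\<^bsub>M\<^esub> (d \<odot>\<^bsub>M\<^esub> g)"
      using x d g by (simp add: R.m_comm[of d a] smult_assoc1)
    finally have "d \<odot>\<^bsub>M\<^esub> x = d \<odot>\<^bsub>M\<^esub> s \<oplus>\<^bsub>M\<^esub> a \<odot>\<^bsub>M\<^esub> (d \<odot>\<^bsub>M\<^esub> g)" .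
    then show ?thesis using x d submoduleE(4,5)[OF S] by simp
  qed
  show ?thesis
  proof (rule restrict_in_dual_hom[OF line_sum_submodule[OF S g]])
    fix x y assume "x \<in> line_sum R M S g" "y \<in> line_sum R M S g"
    then show "\<phi> (d \<odot>\<^bsub>M\<^esub> (x \<oplus>\<^bsub>M\<^esub> y)) = \<phi> (d \<odot>\<^bsub>M\<^esub> x) \<oplus> \<phi> (d \<odot>\<^bsub>M\<^esub> y)"
      using d dS \<phi>D(2) S' by (simp add: smult_r_distr subsetD)
  next
    fix r x assume "r \<in> carrier R" "x \<in> line_sum R M S g"
    then show "\<phi> (d \<odot>\<^bsub>M\<^esub> (r \<odot>\<^bsub>M\<^esub> x)) = r \<otimes> \<phi> (d \<odot>\<^bsub>M\<^esub> x)"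
      using d dS \<phi>D(3) S' by (metis R.m_comm smult_assoc1 subsetD)
  qed (use dS \<phi>D(1) in blast)
qed

lemma dual_hom_extend_nonvanishing:
  assumes R: "domain R" and S: "submodule S R M" and g: "g \<in> carrier M"
    and \<phi>: "\<phi> \<in> dual_hom R (M\<lparr>carrier := S\<rparr>)" and m: "m \<in> S" "\<phi> m \<noteq> \<zero>"
  obtains \<psi> where "\<psi> \<in> dual_hom R (M\<lparr>carrier := line_sum R M S g\<rparr>)" "\<psi> m \<noteq> \<zero>"
proof (cases "\<exists>d\<in>carrier R. d \<noteq> \<zero> \<and> d \<odot>\<^bsub>M\<^esub> g \<in> S")
  case True
  then obtain d where d: "d \<in> carrier R" "d \<noteq> \<zero>" "d \<odot>\<^bsub>M\<^esub> g \<in> S" by blast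
  let ?\<psi> = "\<lambda>x\<in>line_sum R M S g. \<phi> (d \<odot>\<^bsub>M\<^esub> x)"
  have "?\<psi> m = d \<otimes> \<phi> m"
    using m d dual_hom_on_submoduleD(3)[OF \<phi>] subset_line_sum[OF S g] by auto
  then have "?\<psi> m \<noteq> \<zero>"
    using m d dual_hom_on_submoduleD(1)[OF \<phi>] domain.integral[OF R] by auto
  then show ?thesis using that dual_hom_extend_scaled[OF S g d(1,3) \<phi>] by blast
next
  case False
  then have indep: "\<And>d. d \<in> carrier R \<Longrightarrow> d \<odot>\<^bsub>M\<^esub> g \<in> S \<Longrightarrow> d = \<zero>" by blast
  obtain \<psi> where \<psi>: "\<psi> \<in> dual_hom R (M\<lparr>carrier := line_sum R M S g\<rparr>)"
    and \<psi>_comb: "\<And>s a. s \<in> S \<Longrightarrow> a \<in> carrier R \<Longrightarrow> \<psi> (s \<oplus>\<^bsub>M\<^esub> a \<odot>\<^bsub>M\<^esub> g) = \<phi> s \<oplus> a \<otimes> \<zero>"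
    using dual_hom_extend_line[OF S g indep \<phi> R.zero_closed] by blast
  have "m = m \<oplus>\<^bsub>M\<^esub> \<zero> \<odot>\<^bsub>M\<^esub> g" using m submoduleE(1)[OF S] g by auto
  then have "\<psi> m = \<phi> m"
    using \<psi>_comb[OF m(1) R.zero_closed] m dual_hom_on_submoduleD(1)[OF \<phi>] by simp
  then show ?thesis using that \<psi> m by simp
qed

end

lemma (in domain) non_zero_divisors_eq: "non_zero_divisors R = carrier R - {\<zero>}"
  unfolding non_zero_divisors_def using integral one_not_zero by fastforce

context module
begin

lemma exists_dual_hom_nonvanishing:
  assumes R: "domain R" and gs: "set gs \<subseteq> carrier M" "lin_span R M gs = carrier M"
    and m: "m \<in> carrier M" "m \<notin> torsion R M"
  shows "\<exists>\<phi>\<in>dual_hom R M. \<phi> m \<noteq> \<zero>"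
proof -
  have indep: "d = \<zero>" if d: "d \<in> carrier R" "d \<odot>\<^bsub>M\<^esub> m \<in> {\<zero>\<^bsub>M\<^esub>}" for d
  proof (rule ccontr)
    assume "d \<noteq> \<zero>"
    then have "d \<in> non_zero_divisors R" using d domain.non_zero_divisors_eq[OF R] by simp
    then have "m \<in> torsion R M" using d m unfolding torsion_def by auto
    then show False using m by simp
  qed
  (* m is the last generator, so the induction starts from the line R m, where a m |-> a is
     well defined because m is not torsion. *)
  have span_dual: "\<exists>\<phi>\<in>dual_hom R (M\<lparr>carrier := lin_span R M (hs @ [m])\<rparr>). \<phi> m \<noteq> \<zero>"
    if "set hs \<subseteq> carrier M" for hs
    using that
  proof (induction hs)
    case Nil
    have "(\<lambda>x\<in>{\<zero>\<^bsub>M\<^esub>}. \<zero>) \<in> dual_hom R (M\<lparr>carrier := {\<zero>\<^bsub>M\<^esub>}\<rparr>)"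
      by (rule restrict_in_dual_hom[OF zero_submodule]) auto
    from dual_hom_extend_line[OF zero_submodule m(1) indep this R.one_closed]
    obtain \<phi> where \<phi>: "\<phi> \<in> dual_hom R (M\<lparr>carrier := line_sum R M {\<zero>\<^bsub>M\<^esub>} m\<rparr>)"
      and \<phi>_comb: "\<phi> (\<zero>\<^bsub>M\<^esub> \<oplus>\<^bsub>M\<^esub> \<one> \<odot>\<^bsub>M\<^esub> m) = (\<lambda>x\<in>{\<zero>\<^bsub>M\<^esub>}. \<zero>) \<zero>\<^bsub>M\<^esub> \<oplus> \<one> \<otimes> \<one>"
      by blast
    have "\<phi> m = \<one>" using \<phi>_comb m by simp
    then show ?case using \<phi> domain.one_not_zero[OF R] by (intro bexI[of _ \<phi>]) simp_all
  next
    case (Cons h hs)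
    then obtain \<phi> where \<phi>: "\<phi> \<in> dual_hom R (M\<lparr>carrier := lin_span R M (hs @ [m])\<rparr>)" "\<phi> m \<noteq> \<zero>"
      by auto
    have hs: "set (hs @ [m]) \<subseteq> carrier M" and h: "h \<in> carrier M" using Cons.prems m by auto
    have "m \<in> lin_span R M (hs @ [m])" using mem_lin_span[OF hs] by simp
    from dual_hom_extend_nonvanishing[OF R lin_span_submodule[OF hs] h \<phi>(1) this \<phi>(2)]
    obtain \<psi> where
      "\<psi> \<in> dual_hom R (M\<lparr>carrier := line_sum R M (lin_span R M (hs @ [m])) h\<rparr>)" "\<psi> m \<noteq> \<zero>"
      by blast
    then show ?case by (intro bexI[of _ \<psi>]) simp_all
  qed
  moreover have "lin_span R M (gs @ [m]) = carrier M"
    using lin_span_mono[of "gs @ [m]" gs] lin_span_closed[of "gs @ [m]"] gs m by auto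
  ultimately obtain \<phi> where "\<phi> \<in> dual_hom R (M\<lparr>carrier := carrier M\<rparr>)" "\<phi> m \<noteq> \<zero>"
    using span_dual[OF gs(1)] by auto
  then show ?thesis by auto
qed

lemma torsion_subset_ker_can_bidual: "torsion R M \<subseteq> ker_can_bidual R M"
proof
  fix m assume "m \<in> torsion R M"
  then obtain \<alpha> where m: "m \<in> carrier M" and \<alpha>: "\<alpha> \<in> non_zero_divisors R" "\<alpha> \<odot>\<^bsub>M\<^esub> m = \<zero>\<^bsub>M\<^esub>"
    unfolding torsion_def by blast
  have "\<phi> m = \<zero>" if \<phi>: "\<phi> \<in> dual_hom R M" for \<phi>
  proof -
    note \<phi>_lin = \<phi>[unfolded dual_hom_def lin_hom_def, simplified]
    have \<alpha>R: "\<alpha> \<in> carrier R" using \<alpha>(1) unfolding non_zero_divisors_def by blast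
    have "\<alpha> \<otimes> \<phi> m = \<phi> (\<alpha> \<odot>\<^bsub>M\<^esub> m)" using \<alpha>R \<phi>_lin m by simp
    also have "\<dots> = \<phi> (\<zero> \<odot>\<^bsub>M\<^esub> m)" using \<alpha>(2) m by simp
    also have "\<dots> = \<zero>" using \<phi>_lin m by (simp add: Pi_iff del: smult_l_null)
    finally have "\<alpha> \<otimes> \<phi> m = \<zero>" .
    moreover have "\<phi> m \<in> carrier R" using \<phi>_lin m by (simp add: Pi_iff)
    ultimately show ?thesis using \<alpha>(1) unfolding non_zero_divisors_def by blast
  qed
  then have "(\<lambda>\<phi>\<in>dual_hom R M. \<phi> m) = (\<lambda>\<phi>\<in>dual_hom R M. \<zero>)"
    by (rule restrict_ext)
  then show "m \<in> ker_can_bidual R M"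
    unfolding ker_can_bidual_def can_bidual_def using m by simp
qed

lemma ker_can_bidual_eq_torsionI:
  assumes "\<And>m. m \<in> carrier M \<Longrightarrow> m \<notin> torsion R M \<Longrightarrow> \<exists>\<phi>\<in>dual_hom R M. \<phi> m \<noteq> \<zero>"
  shows "ker_can_bidual R M = torsion R M"
proof -
  have "ker_can_bidual R M \<subseteq> torsion R M"
  proof
    fix m assume "m \<in> ker_can_bidual R M"
    then have m: "m \<in> carrier M"
      and vanish: "(\<lambda>\<phi>\<in>dual_hom R M. \<phi> m) = (\<lambda>\<phi>\<in>dual_hom R M. \<zero>)"
      unfolding ker_can_bidual_def can_bidual_def by auto
    have "\<phi> m = \<zero>" if "\<phi> \<in> dual_hom R M" for \<phi>
      using fun_cong[OF vanish, of \<phi>] that by simp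
    then show "m \<in> torsion R M" using assms m by blast
  qed
  then show ?thesis using torsion_subset_ker_can_bidual by blast
qed

end

definition restrict_scalars :: "('a \<Rightarrow> 's) \<Rightarrow> ('s, 'b, 'c) module_scheme \<Rightarrow> ('a, 'b) module" where
  "restrict_scalars h M = \<lparr>carrier = carrier M, monoid.mult = monoid.mult M, monoid.one = \<one>\<^bsub>M\<^esub>,
     ring.zero = \<zero>\<^bsub>M\<^esub>, ring.add = ring.add M, smult = (\<lambda>a x. h a \<odot>\<^bsub>M\<^esub> x)\<rparr>"

lemma restrict_scalars_simps [simp]:
  "carrier (restrict_scalars h M) = carrier M"
  "ring.add (restrict_scalars h M) = ring.add M"
  "ring.zero (restrict_scalars h M) = ring.zero M"
  "module.smult (restrict_scalars h M) = (\<lambda>a x. h a \<odot>\<^bsub>M\<^esub> x)"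
  unfolding restrict_scalars_def by simp_all

lemma module_restrict_scalars:
  assumes B: "cring B" and h: "h \<in> ring_hom B A" and M: "module A M"
  shows "module B (restrict_scalars h M)"
proof -
  interpret module A M by (rule M)
  show ?thesis
  proof (rule moduleI[OF B])
    show "abelian_group (restrict_scalars h M)"
      by (rule abelian_groupI) (auto simp: M.a_ac intro: bexI[of _ "\<ominus>\<^bsub>M\<^esub> _"])
  qed (use h in \<open>simp_all add: ring_hom_closed ring_hom_add ring_hom_mult ring_hom_one
                   smult_l_distr smult_r_distr smult_assoc1\<close>)
qed

lemma torsion_restrict_scalars_subset:
  assumes "h ` non_zero_divisors B \<subseteq> non_zero_divisors A"
  shows "torsion B (restrict_scalars h M) \<subseteq> torsion A M"
  using assms unfolding torsion_def by auto

section \<open>The truncated polynomial ring\<close>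

lemma UP_carrier: "carrier (UP R) = up R"
  unfolding UP_def by simp

lemma UP_coeff: "p \<in> up R \<Longrightarrow> coeff (UP R) p k = p k"
  unfolding UP_def by simp

locale truncated_poly = R: cring R for R :: "('a, 'r) ring_scheme" (structure) +
  fixes n :: nat

sublocale truncated_poly \<subseteq> P: UP_cring R "UP R"
  by unfold_locales

context truncated_poly
begin

abbreviation P where "P \<equiv> UP R"
abbreviation Rn where "Rn \<equiv> trunc_poly_ring R n"
abbreviation I where "I \<equiv> PIdl\<^bsub>P\<^esub> (monom P \<one> n)"
abbreviation proj where "proj \<equiv> a_r_coset P I"

definition emb :: "'a \<Rightarrow> (nat \<Rightarrow> 'a) set" where
  "emb r = proj (monom P r 0)"

definition tvar :: "(nat \<Rightarrow> 'a) set" where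
  "tvar = proj (monom P \<one> 1)"

lemma ideal_I: "ideal I P"
  by (rule P.cgenideal_ideal) simp

lemma Rn_eq: "Rn = P Quot I"
  unfolding trunc_poly_ring_def ..

lemma cring_Rn: "cring Rn"
  unfolding Rn_eq by (rule ideal.quotient_is_cring[OF ideal_I P.UP_cring])

lemma proj_ring_hom_cring: "ring_hom_cring P Rn proj"
  unfolding Rn_eq by (rule ideal.rcos_ring_hom_cring[OF ideal_I P.UP_cring])

end

sublocale truncated_poly \<subseteq> Rn: cring Rn
  by (rule cring_Rn)

sublocale truncated_poly \<subseteq> proj: ring_hom_cring P Rn proj
  by (rule proj_ring_hom_cring)

context truncated_poly
begin

lemma carrier_Rn: "carrier Rn = proj ` carrier P"
  unfolding Rn_eq FactRing_def using A_RCOSETS_def'[of P I] by auto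

lemma proj_eq_zero_iff_mem:
  assumes "p \<in> carrier P"
  shows "proj p = \<zero>\<^bsub>Rn\<^esub> \<longleftrightarrow> p \<in> I"
proof -
  interpret ideal I P by (rule ideal_I)
  show ?thesis using assms a_rcos_self a_rcos_const unfolding Rn_eq FactRing_def by auto
qed

lemma coeff_monom_mult_below:
  assumes q: "q \<in> carrier P" and k: "k < n"
  shows "coeff P (monom P \<one> n \<otimes>\<^bsub>P\<^esub> q) k = \<zero>"
proof -
  have "coeff P (monom P \<one> n \<otimes>\<^bsub>P\<^esub> q) k = (\<Oplus>i\<in>{..k}. coeff P (monom P \<one> n) i \<otimes> coeff P q (k - i))"
    using q by simp
  also have "\<dots> = (\<Oplus>i\<in>{..k}. \<zero>)"
    by (rule R.finsum_cong) (use k q in auto)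
  finally show ?thesis by simp
qed

lemma proj_eq_zero_iff:
  assumes p: "p \<in> carrier P"
  shows "proj p = \<zero>\<^bsub>Rn\<^esub> \<longleftrightarrow> (\<forall>k<n. coeff P p k = \<zero>)"
proof
  assume "proj p = \<zero>\<^bsub>Rn\<^esub>"
  then obtain q where q: "q \<in> carrier P" "p = q \<otimes>\<^bsub>P\<^esub> monom P \<one> n"
    using proj_eq_zero_iff_mem[OF p] unfolding cgenideal_def by blast
  then have "p = monom P \<one> n \<otimes>\<^bsub>P\<^esub> q" using P.m_comm by simp
  then show "\<forall>k<n. coeff P p k = \<zero>" using coeff_monom_mult_below[OF q(1)] by blast
next
  assume low: "\<forall>k<n. coeff P p k = \<zero>"
  have p_up: "p \<in> up R" using p by (simp only: UP_carrier)
  define q where "q k = p (k + n)" for k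
  have q_up: "q \<in> up R"
  proof
    show "q i \<in> carrier R" for i using mem_upD[OF p_up] by (simp only: q_def)
    obtain N where "bound \<zero> N p" using R.bound_upD[OF p_up] ..
    then have "bound \<zero> N q" unfolding bound_def q_def by simp
    then show "\<exists>N. bound \<zero> N q" ..
  qed
  then have q: "q \<in> carrier P" by (simp only: UP_carrier)
  have "monom P \<one> n \<otimes>\<^bsub>P\<^esub> q = p"
  proof (rule P.up_eqI)
    fix k
    show "coeff P (monom P \<one> n \<otimes>\<^bsub>P\<^esub> q) k = coeff P p k"
    proof (cases "k < n")
      case True
      then show ?thesis using coeff_monom_mult_below[OF q] low by simp
    next
      case False
      then obtain j where k: "k = j + n" by (metis add.commute le_add_diff_inverse not_less)
      have "coeff P (monom P \<one> n \<otimes>\<^bsub>P\<^esub> q) k = \<one> \<otimes> coeff P q j"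
        unfolding k by (rule P.coeff_monom_mult[OF R.one_closed q])
      also have "\<dots> = coeff P p k"
        using mem_upD[OF p_up] by (simp add: UP_coeff[OF q_up] UP_coeff[OF p_up] q_def k)
      finally show ?thesis .
    qed
  qed (use q p in simp_all)
  then have "p \<in> I" using q P.m_comm unfolding cgenideal_def by force
  then show "proj p = \<zero>\<^bsub>Rn\<^esub>" using proj_eq_zero_iff_mem[OF p] by simp
qed

lemma emb_closed [simp]: "r \<in> carrier R \<Longrightarrow> emb r \<in> carrier Rn"
  unfolding emb_def by simp

lemma tvar_closed [simp]: "tvar \<in> carrier Rn"
  unfolding tvar_def by simp

lemma emb_ring_hom: "emb \<in> ring_hom R Rn"
proof -
  have "proj \<circ> (\<lambda>r. monom P r 0) \<in> ring_hom R Rn"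
    using ring_hom_trans[OF P.const_ring_hom proj.homh] .
  then show ?thesis unfolding emb_def comp_def .
qed

lemma proj_monom: "r \<in> carrier R \<Longrightarrow> proj (monom P r i) = emb r \<otimes>\<^bsub>Rn\<^esub> tvar [^]\<^bsub>Rn\<^esub> i"
proof -
  assume r: "r \<in> carrier R"
  have "monom P r i = monom P r 0 \<otimes>\<^bsub>P\<^esub> monom P \<one> 1 [^]\<^bsub>P\<^esub> i"
    using r P.monom_mult[of r \<one> 0 i] P.monom_pow[of \<one> 1 i] by simp
  then show ?thesis
    using r unfolding emb_def tvar_def by (simp add: proj.ring.hom_nat_pow)
qed

lemma tvar_pow_eq_zero:
  assumes "n \<le> i"
  shows "tvar [^]\<^bsub>Rn\<^esub> i = \<zero>\<^bsub>Rn\<^esub>"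
proof -
  have "proj (monom P \<one> i) = \<zero>\<^bsub>Rn\<^esub>"
    using assms by (subst proj_eq_zero_iff) auto
  then show ?thesis
    using proj_monom[of \<one> i] ring_hom_one[OF emb_ring_hom] by simp
qed

lemma Rn_induct [consumes 1, case_names zero add monom]:
  assumes a: "a \<in> carrier Rn"
    and zero: "Q \<zero>\<^bsub>Rn\<^esub>"
    and add: "\<And>x y. x \<in> carrier Rn \<Longrightarrow> y \<in> carrier Rn \<Longrightarrow> Q x \<Longrightarrow> Q y \<Longrightarrow> Q (x \<oplus>\<^bsub>Rn\<^esub> y)"
    and monom: "\<And>r (i::nat). r \<in> carrier R \<Longrightarrow> Q (emb r \<otimes>\<^bsub>Rn\<^esub> tvar [^]\<^bsub>Rn\<^esub> i)"
  shows "Q a"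
proof -
  obtain p where p: "p \<in> carrier P" "a = proj p" using a carrier_Rn by auto
  have "proj p = proj (\<Oplus>\<^bsub>P\<^esub>i\<in>{..deg R p}. monom P (coeff P p i) i)"
    by (simp only: P.up_repr[OF p(1)])
  also have "\<dots> = (\<Oplus>\<^bsub>Rn\<^esub>i\<in>{..deg R p}. proj (monom P (coeff P p i) i))"
    using p(1) by (simp add: Pi_def comp_def)
  also have "\<dots> = (\<Oplus>\<^bsub>Rn\<^esub>i\<in>{..deg R p}. emb (coeff P p i) \<otimes>\<^bsub>Rn\<^esub> tvar [^]\<^bsub>Rn\<^esub> i)"
    using P.coeff_closed[OF p(1)] by (intro Rn.finsum_cong') (simp_all add: Pi_def proj_monom)
  also have "\<dots> \<in> {x \<in> carrier Rn. Q x}"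
    by (rule Rn.finsum_add_closed)
      (use zero add monom[OF P.coeff_closed[OF p(1)]] P.coeff_closed[OF p(1)] in auto)
  finally show ?thesis using p(2) by simp
qed

lemma emb_non_zero_divisor:
  assumes r: "r \<in> non_zero_divisors R"
  shows "emb r \<in> non_zero_divisors Rn"
  unfolding non_zero_divisors_def
proof (intro CollectI conjI ballI impI)
  have rc: "r \<in> carrier R" and r_cancel: "\<And>u. u \<in> carrier R \<Longrightarrow> r \<otimes> u = \<zero> \<Longrightarrow> u = \<zero>"
    using r unfolding non_zero_divisors_def by auto
  then show "emb r \<in> carrier Rn" by simp
  fix v assume v: "v \<in> carrier Rn" and rv: "emb r \<otimes>\<^bsub>Rn\<^esub> v = \<zero>\<^bsub>Rn\<^esub>"
  obtain p where p: "p \<in> carrier P" "v = proj p" using v carrier_Rn by auto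
  have "proj (r \<odot>\<^bsub>P\<^esub> p) = emb r \<otimes>\<^bsub>Rn\<^esub> v"
    using p rc unfolding emb_def by (simp add: P.monom_mult_is_smult[symmetric])
  then have "proj (r \<odot>\<^bsub>P\<^esub> p) = \<zero>\<^bsub>Rn\<^esub>" using rv by simp
  then have "coeff P (r \<odot>\<^bsub>P\<^esub> p) k = \<zero>" if "k < n" for k
    using proj_eq_zero_iff[of "r \<odot>\<^bsub>P\<^esub> p"] p(1) rc that by simp
  then have "coeff P p k = \<zero>" if "k < n" for k
    using r_cancel[OF P.coeff_closed[OF p(1)]] p(1) rc that by simp
  then show "v = \<zero>\<^bsub>Rn\<^esub>" using proj_eq_zero_iff[OF p(1)] p(2) by simp
qed

lemma finsum_monomials_eq_zero:
  assumes b: "b \<in> {..<n} \<rightarrow> carrier R"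
    and zero: "(\<Oplus>\<^bsub>Rn\<^esub>i\<in>{..<n}. emb (b i) \<otimes>\<^bsub>Rn\<^esub> tvar [^]\<^bsub>Rn\<^esub> i) = \<zero>\<^bsub>Rn\<^esub>"
    and k: "k < n"
  shows "b k = \<zero>"
proof -
  let ?p = "\<Oplus>\<^bsub>P\<^esub>i\<in>{..<n}. monom P (b i) i"
  have p: "?p \<in> carrier P" using b by (simp add: Pi_def)
  have "proj ?p = (\<Oplus>\<^bsub>Rn\<^esub>i\<in>{..<n}. proj (monom P (b i) i))"
    using b by (simp add: Pi_def comp_def)
  also have "\<dots> = (\<Oplus>\<^bsub>Rn\<^esub>i\<in>{..<n}. emb (b i) \<otimes>\<^bsub>Rn\<^esub> tvar [^]\<^bsub>Rn\<^esub> i)"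
    using b by (intro Rn.finsum_cong') (auto simp: Pi_iff proj_monom)
  also have "\<dots> = \<zero>\<^bsub>Rn\<^esub>" by (rule zero)
  finally have "\<forall>k<n. coeff P ?p k = \<zero>" using proj_eq_zero_iff[OF p] by simp
  have "b k = coeff P ?p k"
  proof -
    have "coeff P ?p k = (\<Oplus>i\<in>{..<n}. coeff P (monom P (b i) i) k)"
      using b by (simp add: P.coeff_finsum Pi_def)
    also have "\<dots> = (\<Oplus>i\<in>{..<n}. if k = i then b i else \<zero>)"
      using b by (intro R.finsum_cong') (auto simp: Pi_iff)
    also have "\<dots> = b k" by (rule R.finsum_singleton) (use b k in auto)
    finally show ?thesis by simp
  qed
  also have "\<dots> = \<zero>" using \<open>\<forall>k<n. coeff P ?p k = \<zero>\<close> k by simp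
  finally show ?thesis .
qed

lemma lin_span_restrict_scalars:
  assumes M: "module Rn M" and gs: "set gs \<subseteq> carrier M" "lin_span Rn M gs = carrier M"
  shows "lin_span R (restrict_scalars emb M) [tvar [^]\<^bsub>Rn\<^esub> i \<odot>\<^bsub>M\<^esub> g. g \<leftarrow> gs, i \<leftarrow> [0..<n]] = carrier M"
    (is "lin_span R ?Mr ?L = _")
proof -
  interpret M: module Rn M by (rule M)
  interpret Mr: module R ?Mr by (rule module_restrict_scalars[OF R.cring_axioms emb_ring_hom M])
  have L: "set ?L \<subseteq> carrier M" using gs(1) by auto
  have sub: "submodule (lin_span R ?Mr ?L) R ?Mr" using Mr.lin_span_submodule L by simp
  have gen: "a \<odot>\<^bsub>M\<^esub> g \<in> lin_span R ?Mr ?L" if a: "a \<in> carrier Rn" and g: "g \<in> set gs" for a g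
    using a
  proof (induction a rule: Rn_induct)
    case zero
    then show ?case using g gs(1) Mr.submodule_zero_closed[OF sub] by auto
  next
    case (add a b)
    then show ?case using g gs(1) Mr.submoduleE(5)[OF sub] by (auto simp: M.smult_l_distr)
  next
    case (monom r i)
    have "tvar [^]\<^bsub>Rn\<^esub> i \<odot>\<^bsub>M\<^esub> g \<in> lin_span R ?Mr ?L"
    proof (cases "i < n")
      case True
      then show ?thesis using g L by (intro Mr.mem_lin_span) force+
    next
      case False
      then show ?thesis using g gs(1) tvar_pow_eq_zero Mr.submodule_zero_closed[OF sub] by auto
    qed
    then have "emb r \<odot>\<^bsub>M\<^esub> (tvar [^]\<^bsub>Rn\<^esub> i \<odot>\<^bsub>M\<^esub> g) \<in> lin_span R ?Mr ?L"
      using monom Mr.submoduleE(4)[OF sub] by simp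
    then show ?case using monom g gs(1) by (auto simp: M.smult_assoc1)
  qed
  have "lin_span Rn M gs \<subseteq> lin_span R ?Mr ?L"
  proof (rule lin_span_subsetI)
    show "\<zero>\<^bsub>M\<^esub> \<in> lin_span R ?Mr ?L" using Mr.submodule_zero_closed[OF sub] by simp
  next
    fix z a g assume "z \<in> lin_span R ?Mr ?L" "a \<in> carrier Rn" "g \<in> set gs"
    then show "z \<oplus>\<^bsub>M\<^esub> a \<odot>\<^bsub>M\<^esub> g \<in> lin_span R ?Mr ?L" using gen Mr.submoduleE(5)[OF sub] by simp
  qed
  then show ?thesis using gs(2) Mr.lin_span_closed[of ?L] L by auto
qed

section \<open>Lifting linear forms from R to R[n]\<close>

definition lift_functional ::
    "((nat \<Rightarrow> 'a) set, 'b, 'c) module_scheme \<Rightarrow> ('b \<Rightarrow> 'a) \<Rightarrow> 'b \<Rightarrow> (nat \<Rightarrow> 'a) set" where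
  "lift_functional M \<phi> = (\<lambda>x\<in>carrier M.
     \<Oplus>\<^bsub>Rn\<^esub>i\<in>{..<n}. emb (\<phi> (tvar [^]\<^bsub>Rn\<^esub> (n - Suc i) \<odot>\<^bsub>M\<^esub> x)) \<otimes>\<^bsub>Rn\<^esub> tvar [^]\<^bsub>Rn\<^esub> i)"

end

locale truncated_poly_functional = truncated_poly R n for R :: "('a, 'r) ring_scheme" (structure) and n +
  fixes M :: "((nat \<Rightarrow> 'a) set, 'b, 'c) module_scheme" and \<phi> :: "'b \<Rightarrow> 'a"
  assumes module_M: "module (trunc_poly_ring R n) M"
    and \<phi>_dual_hom: "\<phi> \<in> dual_hom R (restrict_scalars emb M)"

sublocale truncated_poly_functional \<subseteq> M: module Rn M
  by (rule module_M)

context truncated_poly_functional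
begin

abbreviation \<psi> where "\<psi> \<equiv> lift_functional M \<phi>"

lemma \<phi>_closed: "x \<in> carrier M \<Longrightarrow> \<phi> x \<in> carrier R"
  and \<phi>_add: "x \<in> carrier M \<Longrightarrow> y \<in> carrier M \<Longrightarrow> \<phi> (x \<oplus>\<^bsub>M\<^esub> y) = \<phi> x \<oplus> \<phi> y"
  and \<phi>_emb_smult: "a \<in> carrier R \<Longrightarrow> x \<in> carrier M \<Longrightarrow> \<phi> (emb a \<odot>\<^bsub>M\<^esub> x) = a \<otimes> \<phi> x"
  using \<phi>_dual_hom unfolding dual_hom_def lin_hom_def by auto

lemma \<phi>_zero: "\<phi> \<zero>\<^bsub>M\<^esub> = \<zero>"
  using \<phi>_emb_smult[of \<zero> "\<zero>\<^bsub>M\<^esub>"] \<phi>_closed[of "\<zero>\<^bsub>M\<^esub>"]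
    ring_hom_zero[OF emb_ring_hom R.ring_axioms Rn.ring_axioms]
  by simp

lemma lift_closed: "x \<in> carrier M \<Longrightarrow> \<psi> x \<in> carrier Rn"
  unfolding lift_functional_def by (simp add: Pi_def \<phi>_closed)

lemma lift_add:
  assumes x: "x \<in> carrier M" and y: "y \<in> carrier M"
  shows "\<psi> (x \<oplus>\<^bsub>M\<^esub> y) = \<psi> x \<oplus>\<^bsub>Rn\<^esub> \<psi> y"
proof -
  have "\<psi> (x \<oplus>\<^bsub>M\<^esub> y) = (\<Oplus>\<^bsub>Rn\<^esub>i\<in>{..<n}.
      emb (\<phi> (tvar [^]\<^bsub>Rn\<^esub> (n - Suc i) \<odot>\<^bsub>M\<^esub> x)) \<otimes>\<^bsub>Rn\<^esub> tvar [^]\<^bsub>Rn\<^esub> i \<oplus>\<^bsub>Rn\<^esub>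
      emb (\<phi> (tvar [^]\<^bsub>Rn\<^esub> (n - Suc i) \<odot>\<^bsub>M\<^esub> y)) \<otimes>\<^bsub>Rn\<^esub> tvar [^]\<^bsub>Rn\<^esub> i)"
    unfolding lift_functional_def using x y
    by (auto intro!: Rn.finsum_cong'
        simp: M.smult_r_distr \<phi>_add \<phi>_closed ring_hom_add[OF emb_ring_hom] Rn.l_distr)
  also have "\<dots> = \<psi> x \<oplus>\<^bsub>Rn\<^esub> \<psi> y"
    unfolding lift_functional_def using x y by (simp add: Rn.finsum_addf Pi_def \<phi>_closed)
  finally show ?thesis .
qed

lemma lift_emb_smult:
  assumes r: "r \<in> carrier R" and x: "x \<in> carrier M"
  shows "\<psi> (emb r \<odot>\<^bsub>M\<^esub> x) = emb r \<otimes>\<^bsub>Rn\<^esub> \<psi> x"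
proof -
  have swap: "tvar [^]\<^bsub>Rn\<^esub> j \<odot>\<^bsub>M\<^esub> (emb r \<odot>\<^bsub>M\<^esub> x) = emb r \<odot>\<^bsub>M\<^esub> (tvar [^]\<^bsub>Rn\<^esub> j \<odot>\<^bsub>M\<^esub> x)" for j :: nat
    using r x by (simp add: M.smult_assoc1[symmetric] Rn.m_comm)
  have "\<psi> (emb r \<odot>\<^bsub>M\<^esub> x) = (\<Oplus>\<^bsub>Rn\<^esub>i\<in>{..<n}.
      emb r \<otimes>\<^bsub>Rn\<^esub> (emb (\<phi> (tvar [^]\<^bsub>Rn\<^esub> (n - Suc i) \<odot>\<^bsub>M\<^esub> x)) \<otimes>\<^bsub>Rn\<^esub> tvar [^]\<^bsub>Rn\<^esub> i))"
    unfolding lift_functional_def using r x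
    by (auto intro!: Rn.finsum_cong'
        simp: swap \<phi>_emb_smult \<phi>_closed ring_hom_mult[OF emb_ring_hom] Rn.m_assoc)
  also have "\<dots> = emb r \<otimes>\<^bsub>Rn\<^esub> \<psi> x"
    unfolding lift_functional_def using r x by (simp add: Rn.finsum_rdistr Pi_def \<phi>_closed)
  finally show ?thesis .
qed

lemma lift_tvar_smult:
  assumes x: "x \<in> carrier M"
  shows "\<psi> (tvar \<odot>\<^bsub>M\<^esub> x) = tvar \<otimes>\<^bsub>Rn\<^esub> \<psi> x"
proof (cases n)
  case 0
  then have empty: "{..<n} = {}" by simp
  have "\<psi> y = \<zero>\<^bsub>Rn\<^esub>" if "y \<in> carrier M" for y
    using that unfolding lift_functional_def empty by simp
  then show ?thesis using x by simp
next
  case (Suc k)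
  (* Both sides equal the sum of the F i over i <= n: the extra terms F 0 and F n vanish
     because t^n = 0. *)
  define F where "F i = emb (\<phi> (tvar [^]\<^bsub>Rn\<^esub> (n - i) \<odot>\<^bsub>M\<^esub> x)) \<otimes>\<^bsub>Rn\<^esub> tvar [^]\<^bsub>Rn\<^esub> i" for i
  have F: "F \<in> {..n} \<rightarrow> carrier Rn" using x by (simp add: F_def \<phi>_closed)
  have "\<psi> (tvar \<odot>\<^bsub>M\<^esub> x) = (\<Oplus>\<^bsub>Rn\<^esub>i\<in>{..<n}. F i)"
  proof -
    have shift: "tvar [^]\<^bsub>Rn\<^esub> (n - Suc i) \<odot>\<^bsub>M\<^esub> (tvar \<odot>\<^bsub>M\<^esub> x) = tvar [^]\<^bsub>Rn\<^esub> (n - i) \<odot>\<^bsub>M\<^esub> x" if "i < n" for i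
      using x that by (simp add: M.smult_assoc1[symmetric] Suc_diff_Suc[symmetric] del: Suc_diff_Suc)
    show ?thesis
      unfolding lift_functional_def F_def using x
      by (simp, intro Rn.finsum_cong') (simp_all add: shift \<phi>_closed Pi_def)
  qed
  also have "\<dots> = F n \<oplus>\<^bsub>Rn\<^esub> (\<Oplus>\<^bsub>Rn\<^esub>i\<in>{..<n}. F i)"
    using x F by (simp add: F_def tvar_pow_eq_zero \<phi>_closed)
  also have "\<dots> = (\<Oplus>\<^bsub>Rn\<^esub>i\<in>{..n}. F i)"
    using Rn.add.finprod_Suc3[OF F] by simp
  also have "\<dots> = (\<Oplus>\<^bsub>Rn\<^esub>i\<in>{..k}. F (Suc i)) \<oplus>\<^bsub>Rn\<^esub> F 0"
    using Rn.finsum_Suc2[of F k] F Suc by simp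
  also have "\<dots> = (\<Oplus>\<^bsub>Rn\<^esub>i\<in>{..<n}. tvar \<otimes>\<^bsub>Rn\<^esub> (emb (\<phi> (tvar [^]\<^bsub>Rn\<^esub> (n - Suc i) \<odot>\<^bsub>M\<^esub> x)) \<otimes>\<^bsub>Rn\<^esub> tvar [^]\<^bsub>Rn\<^esub> i))"
  proof -
    have "F 0 = \<zero>\<^bsub>Rn\<^esub>"
      using x tvar_pow_eq_zero[of n] ring_hom_zero[OF emb_ring_hom R.ring_axioms Rn.ring_axioms]
      by (simp add: F_def \<phi>_zero)
    moreover have "(\<Oplus>\<^bsub>Rn\<^esub>i\<in>{..k}. F (Suc i)) = (\<Oplus>\<^bsub>Rn\<^esub>i\<in>{..<n}. tvar \<otimes>\<^bsub>Rn\<^esub> (emb (\<phi> (tvar [^]\<^bsub>Rn\<^esub> (n - Suc i) \<odot>\<^bsub>M\<^esub> x)) \<otimes>\<^bsub>Rn\<^esub> tvar [^]\<^bsub>Rn\<^esub> i))"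
    proof -
      have "{..<n} = {..k}" using Suc by auto
      then show ?thesis
        using x by (intro Rn.finsum_cong') (auto simp: F_def \<phi>_closed Rn.m_ac)
    qed
    ultimately show ?thesis using x by (simp add: Pi_def \<phi>_closed)
  qed
  also have "\<dots> = tvar \<otimes>\<^bsub>Rn\<^esub> \<psi> x"
    unfolding lift_functional_def using x by (simp add: Rn.finsum_rdistr Pi_def \<phi>_closed)
  finally show ?thesis .
qed

lemma lift_tvar_pow_smult:
  assumes x: "x \<in> carrier M"
  shows "\<psi> (tvar [^]\<^bsub>Rn\<^esub> (i::nat) \<odot>\<^bsub>M\<^esub> x) = tvar [^]\<^bsub>Rn\<^esub> i \<otimes>\<^bsub>Rn\<^esub> \<psi> x"
proof (induction i)
  case 0
  then show ?case using x lift_closed by simp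
next
  case (Suc i)
  have "tvar [^]\<^bsub>Rn\<^esub> Suc i \<odot>\<^bsub>M\<^esub> x = tvar \<odot>\<^bsub>M\<^esub> (tvar [^]\<^bsub>Rn\<^esub> i \<odot>\<^bsub>M\<^esub> x)"
    using x by (simp add: Rn.m_comm M.smult_assoc1)
  then show ?case
    using x Suc lift_tvar_smult lift_closed by (simp add: Rn.m_ac)
qed

lemma lift_smult:
  assumes a: "a \<in> carrier Rn" and x: "x \<in> carrier M"
  shows "\<psi> (a \<odot>\<^bsub>M\<^esub> x) = a \<otimes>\<^bsub>Rn\<^esub> \<psi> x"
  using a x
proof (induction a arbitrary: x rule: Rn_induct)
  case zero
  then show ?case using lift_closed[of x] lift_closed[of "\<zero>\<^bsub>M\<^esub>"] lift_add[of "\<zero>\<^bsub>M\<^esub>" "\<zero>\<^bsub>M\<^esub>"]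
    by simp
next
  case (add a b)
  then show ?case using lift_closed by (simp add: M.smult_l_distr lift_add Rn.l_distr)
next
  case (monom r i)
  then show ?case
    using lift_closed by (simp add: M.smult_assoc1 lift_emb_smult lift_tvar_pow_smult Rn.m_assoc)
qed

lemma lift_functional_in_dual_hom: "\<psi> \<in> dual_hom Rn M"
proof -
  have "\<psi> \<in> extensional (carrier M)" unfolding lift_functional_def by simp
  then show ?thesis
    unfolding dual_hom_def lin_hom_def using lift_closed lift_add lift_smult by auto
qed

lemma lift_functional_nonvanishing:
  assumes n: "n \<ge> 1" and x: "x \<in> carrier M" and \<phi>x: "\<phi> x \<noteq> \<zero>"
  shows "\<psi> x \<noteq> \<zero>\<^bsub>Rn\<^esub>"
proof
  assume "\<psi> x = \<zero>\<^bsub>Rn\<^esub>"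
  then have "(\<Oplus>\<^bsub>Rn\<^esub>i\<in>{..<n}. emb (\<phi> (tvar [^]\<^bsub>Rn\<^esub> (n - Suc i) \<odot>\<^bsub>M\<^esub> x)) \<otimes>\<^bsub>Rn\<^esub> tvar [^]\<^bsub>Rn\<^esub> i) = \<zero>\<^bsub>Rn\<^esub>"
    using x unfolding lift_functional_def by simp
  then have "\<phi> (tvar [^]\<^bsub>Rn\<^esub> (n - Suc (n - 1)) \<odot>\<^bsub>M\<^esub> x) = \<zero>"
    using finsum_monomials_eq_zero[of "\<lambda>i. \<phi> (tvar [^]\<^bsub>Rn\<^esub> (n - Suc i) \<odot>\<^bsub>M\<^esub> x)" "n - 1"] n x
    by (simp add: Pi_def \<phi>_closed)
  then show False using n x \<phi>x by simp
qed

end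

lemma (in truncated_poly) exists_dual_hom_nonvanishing_Rn:
  assumes R: "domain R" and n: "n \<ge> 1" and M: "module Rn M" and fin: "finite_type Rn M"
    and m: "m \<in> carrier M" "m \<notin> torsion Rn M"
  shows "\<exists>\<psi>\<in>dual_hom Rn M. \<psi> m \<noteq> \<zero>\<^bsub>Rn\<^esub>"
proof -
  interpret M: module Rn M by (rule M)
  let ?Mr = "restrict_scalars emb M"
  have Mr: "module R ?Mr" by (rule module_restrict_scalars[OF R.cring_axioms emb_ring_hom M])
  obtain gs where gs: "set gs \<subseteq> carrier M" "lin_span Rn M gs = carrier M"
    using M.finite_type_imp_lin_span[OF fin] by blast
  let ?L = "[tvar [^]\<^bsub>Rn\<^esub> i \<odot>\<^bsub>M\<^esub> g. g \<leftarrow> gs, i \<leftarrow> [0..<n]]"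
  have L: "set ?L \<subseteq> carrier ?Mr" and span: "lin_span R ?Mr ?L = carrier ?Mr"
    using gs lin_span_restrict_scalars[OF M gs] by auto
  have "emb ` non_zero_divisors R \<subseteq> non_zero_divisors Rn"
    by (rule image_subsetI) (rule emb_non_zero_divisor)
  then have "m \<notin> torsion R ?Mr" using torsion_restrict_scalars_subset m(2) by (meson subsetD)
  moreover have "m \<in> carrier ?Mr" using m(1) by simp
  ultimately obtain \<phi> where \<phi>: "\<phi> \<in> dual_hom R ?Mr" "\<phi> m \<noteq> \<zero>"
    using module.exists_dual_hom_nonvanishing[OF Mr R L span] by blast
  have "truncated_poly_functional R n M \<phi>"
    unfolding truncated_poly_functional_def truncated_poly_functional_axioms_def
    using truncated_poly_axioms M \<phi>(1) by simp
  then interpret truncated_poly_functional R n M \<phi> .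
  show ?thesis
    using lift_functional_in_dual_hom lift_functional_nonvanishing[OF n m(1) \<phi>(2)] by blast
qed

theorem proposition3p5p2:
  fixes R :: "('a, 'r) ring_scheme" and n :: nat and M :: "((nat \<Rightarrow> 'a) set, 'b, 'c) module_scheme"
  assumes "noetherian_domain R"
    and "n \<ge> 1"
    and "module (trunc_poly_ring R n) M"
    and "finite_type (trunc_poly_ring R n) M"
  shows "ker_can_bidual (trunc_poly_ring R n) M = torsion (trunc_poly_ring R n) M"
proof -
  have R: "domain R" using assms(1) noetherian_domain.axioms(2) by blast
  interpret truncated_poly R n
    by (rule truncated_poly.intro) (rule domain.axioms(1)[OF R])
  interpret M: module Rn M by (rule assms(3))
  show ?thesis
    by (rule M.ker_can_bidual_eq_torsionI)
      (rule exists_dual_hom_nonvanishing_Rn[OF R assms(2-4)])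
qed

end
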